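(* Every $A \in \overline{\square}_\vee$ is a retract in $\mathbf{SLat}$ of $[1]^n$ for some $n \in \mathbb{N}$.
   Context: $\mathbf{SLat}$ is the category of (join-)semilattices—sets with an associative, commutative, idempotent binary operation $\vee$—and homomorphisms preserving $\vee$ (not necessarily preserving bounds or meets). Each semilattice is a poset via $x\le y\iff x\vee y=y$. $\overline{\square}_\vee$ is the full subcategory of $\mathbf{SLat}$ on the finite inhabited semilattices whose induced poset is a distributive lattice. $[1]=\{0<1\}$ with $\vee=\max$, and $[1]^n$ has the pointwise structure. *)

theory Defs
  imports Main
begin

definition semilattice_on :: "'a set \<Rightarrow> ('a \<Rightarrow> 'a \<Rightarrow> 'a) \<Rightarrow> bool" where
  "semilattice_on A j \<longleftrightarrow>
     (\<forall>x\<in>A. \<forall>y\<in>A. j x y \<in> A) \<and>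
     (\<forall>x\<in>A. \<forall>y\<in>A. \<forall>z\<in>A. j (j x y) z = j x (j y z)) \<and>
     (\<forall>x\<in>A. \<forall>y\<in>A. j x y = j y x) \<and>
     (\<forall>x\<in>A. j x x = x)"

definition sl_le :: "('a \<Rightarrow> 'a \<Rightarrow> 'a) \<Rightarrow> 'a \<Rightarrow> 'a \<Rightarrow> bool" where
  "sl_le j x y \<longleftrightarrow> j x y = y"

definition sl_is_glb :: "'a set \<Rightarrow> ('a \<Rightarrow> 'a \<Rightarrow> 'a) \<Rightarrow> 'a \<Rightarrow> 'a \<Rightarrow> 'a \<Rightarrow> bool" where
  "sl_is_glb A j x y m \<longleftrightarrow> m \<in> A \<and> sl_le j m x \<and> sl_le j m y \<and>
     (\<forall>z\<in>A. sl_le j z x \<and> sl_le j z y \<longrightarrow> sl_le j z m)"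

text \<open>The induced poset is a distributive lattice: binary meets (glbs) exist
  (joins are lubs automatically), and meet distributes over join.\<close>
definition distrib_lattice_poset :: "'a set \<Rightarrow> ('a \<Rightarrow> 'a \<Rightarrow> 'a) \<Rightarrow> bool" where
  "distrib_lattice_poset A j \<longleftrightarrow>
     (\<exists>m. (\<forall>x\<in>A. \<forall>y\<in>A. sl_is_glb A j x y (m x y)) \<and>
          (\<forall>x\<in>A. \<forall>y\<in>A. \<forall>z\<in>A. m x (j y z) = j (m x y) (m x z)))"

definition in_box_vee :: "'a set \<Rightarrow> ('a \<Rightarrow> 'a \<Rightarrow> 'a) \<Rightarrow> bool" where
  "in_box_vee A j \<longleftrightarrow> semilattice_on A j \<and> finite A \<and> A \<noteq> {} \<and> distrib_lattice_poset A j"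

definition sl_hom :: "'a set \<Rightarrow> ('a \<Rightarrow> 'a \<Rightarrow> 'a) \<Rightarrow> 'b set \<Rightarrow> ('b \<Rightarrow> 'b \<Rightarrow> 'b) \<Rightarrow> ('a \<Rightarrow> 'b) \<Rightarrow> bool" where
  "sl_hom A jA B jB f \<longleftrightarrow> (\<forall>x\<in>A. f x \<in> B) \<and> (\<forall>x\<in>A. \<forall>y\<in>A. f (jA x y) = jB (f x) (f y))"

text \<open>[1]^n: functions nat \<Rightarrow> bool vanishing from n on (False = 0, True = 1), with pointwise max.\<close>
definition cube :: "nat \<Rightarrow> (nat \<Rightarrow> bool) set" where
  "cube n = {f. \<forall>i\<ge>n. f i = False}"

definition cube_join :: "(nat \<Rightarrow> bool) \<Rightarrow> (nat \<Rightarrow> bool) \<Rightarrow> (nat \<Rightarrow> bool)" where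
  "cube_join f g = (\<lambda>i. f i \<or> g i)"

definition sl_retract :: "'a set \<Rightarrow> ('a \<Rightarrow> 'a \<Rightarrow> 'a) \<Rightarrow> 'b set \<Rightarrow> ('b \<Rightarrow> 'b \<Rightarrow> 'b) \<Rightarrow> bool" where
  "sl_retract A jA B jB \<longleftrightarrow>
     (\<exists>s r. sl_hom A jA B jB s \<and> sl_hom B jB A jA r \<and> (\<forall>x\<in>A. r (s x) = x))"

end

theory Submission
  imports Defs
begin

text \<open>
  Enumerate \<open>A\<close> as \<open>a\<^sub>0, \<dots>, a\<^sub>n\<^sub>-\<^sub>1\<close>. The section sends \<open>x\<close> to the set of indices of join-prime
  elements below \<open>x\<close>; it preserves joins precisely because these elements are join-prime.
  The retraction sends a set of indices \<open>S\<close> to \<open>\<bottom> \<squnion> \<Squnion>\<^sub>i\<^sub>\<in>\<^sub>S a\<^sub>i\<close>, which preserves joins in any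
  semilattice. That the composite is the identity is the fact that in a finite distributive
  lattice every element is the join of the join-primes below it: an element \<open>x\<close> that is not
  join-prime lies below some \<open>u \<squnion> v\<close> but below neither, and distributivity gives
  \<open>x = (x \<sqinter> u) \<squnion> (x \<sqinter> v)\<close> with both parts strictly smaller than \<open>x\<close>.
\<close>

locale join_semilattice =
  fixes A :: "'a set" and join :: "'a \<Rightarrow> 'a \<Rightarrow> 'a" (infixl "\<squnion>" 65)
  assumes semilattice: "semilattice_on A (\<squnion>)"
begin

abbreviation le :: "'a \<Rightarrow> 'a \<Rightarrow> bool" (infix "\<sqsubseteq>" 50)
  where "x \<sqsubseteq> y \<equiv> sl_le (\<squnion>) x y"

lemma join_closed: "x \<in> A \<Longrightarrow> y \<in> A \<Longrightarrow> x \<squnion> y \<in> A"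
  and join_assoc: "x \<in> A \<Longrightarrow> y \<in> A \<Longrightarrow> z \<in> A \<Longrightarrow> x \<squnion> y \<squnion> z = x \<squnion> (y \<squnion> z)"
  and join_commute: "x \<in> A \<Longrightarrow> y \<in> A \<Longrightarrow> x \<squnion> y = y \<squnion> x"
  and join_idem: "x \<in> A \<Longrightarrow> x \<squnion> x = x"
  using semilattice by (auto simp: semilattice_on_def)

lemma le_refl: "x \<in> A \<Longrightarrow> x \<sqsubseteq> x"
  by (simp add: sl_le_def join_idem)

lemma le_trans: "x \<in> A \<Longrightarrow> y \<in> A \<Longrightarrow> z \<in> A \<Longrightarrow> x \<sqsubseteq> y \<Longrightarrow> y \<sqsubseteq> z \<Longrightarrow> x \<sqsubseteq> z"
  unfolding sl_le_def by (metis join_assoc)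

lemma le_antisym: "x \<in> A \<Longrightarrow> y \<in> A \<Longrightarrow> x \<sqsubseteq> y \<Longrightarrow> y \<sqsubseteq> x \<Longrightarrow> x = y"
  unfolding sl_le_def by (metis join_commute)

lemma le_join1: "x \<in> A \<Longrightarrow> y \<in> A \<Longrightarrow> x \<sqsubseteq> x \<squnion> y"
  unfolding sl_le_def by (metis join_assoc join_idem)

lemma le_join2: "x \<in> A \<Longrightarrow> y \<in> A \<Longrightarrow> y \<sqsubseteq> x \<squnion> y"
  using le_join1 join_commute by metis

lemma join_least: "x \<in> A \<Longrightarrow> y \<in> A \<Longrightarrow> z \<in> A \<Longrightarrow> x \<sqsubseteq> z \<Longrightarrow> y \<sqsubseteq> z \<Longrightarrow> x \<squnion> y \<sqsubseteq> z"
  unfolding sl_le_def by (metis join_assoc)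

lemma join_left_idem: "x \<in> A \<Longrightarrow> y \<in> A \<Longrightarrow> x \<squnion> (x \<squnion> y) = x \<squnion> y"
  by (metis join_assoc join_idem)

lemma join_left_commute: "x \<in> A \<Longrightarrow> y \<in> A \<Longrightarrow> z \<in> A \<Longrightarrow> x \<squnion> (y \<squnion> z) = y \<squnion> (x \<squnion> z)"
  by (metis join_assoc join_commute)

definition join_prime :: "'a \<Rightarrow> bool" where
  "join_prime p \<longleftrightarrow> (\<forall>y\<in>A. \<forall>z\<in>A. p \<sqsubseteq> y \<squnion> z \<longrightarrow> p \<sqsubseteq> y \<or> p \<sqsubseteq> z)"

lemma join_prime_le_join_iff:
  assumes "join_prime p" "p \<in> A" "x \<in> A" "y \<in> A"
  shows "p \<sqsubseteq> x \<squnion> y \<longleftrightarrow> p \<sqsubseteq> x \<or> p \<sqsubseteq> y"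
  using assms le_trans[OF \<open>p \<in> A\<close> _ join_closed] le_join1 le_join2
  unfolding join_prime_def by blast

definition primes_below :: "(nat \<Rightarrow> 'a) \<Rightarrow> nat \<Rightarrow> 'a \<Rightarrow> nat \<Rightarrow> bool" where
  "primes_below a n x = (\<lambda>i. i < n \<and> join_prime (a i) \<and> a i \<sqsubseteq> x)"

lemma sl_hom_primes_below:
  assumes "a ` {..<n} \<subseteq> A"
  shows "sl_hom A (\<squnion>) (cube n) cube_join (primes_below a n)"
  using assms join_prime_le_join_iff
  by (fastforce simp: sl_hom_def cube_def primes_below_def cube_join_def)

primrec join_indexed :: "'a \<Rightarrow> (nat \<Rightarrow> 'a) \<Rightarrow> nat \<Rightarrow> (nat \<Rightarrow> bool) \<Rightarrow> 'a" where
  "join_indexed b a 0 S = b"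
| "join_indexed b a (Suc k) S = (if S k then a k \<squnion> join_indexed b a k S else join_indexed b a k S)"

context
  fixes b :: 'a and a :: "nat \<Rightarrow> 'a" and n :: nat
  assumes b: "b \<in> A" and a: "a ` {..<n} \<subseteq> A"
begin

lemma join_indexed_closed: "k \<le> n \<Longrightarrow> join_indexed b a k S \<in> A"
  using a by (induction k) (auto simp: b join_closed image_subset_iff)

lemma join_indexed_cube_join:
  "k \<le> n \<Longrightarrow> join_indexed b a k (cube_join S T) = join_indexed b a k S \<squnion> join_indexed b a k T"
proof (induction k)
  case 0
  then show ?case by (simp add: b join_idem)
next
  case (Suc k)
  then have "a k \<in> A" "join_indexed b a k S \<in> A" "join_indexed b a k T \<in> A"
    using a join_indexed_closed by auto
  with Suc show ?case
    by (auto simp: cube_join_def join_assoc join_closed join_left_commute join_left_idem)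
qed

lemma sl_hom_join_indexed: "sl_hom (cube n) cube_join A (\<squnion>) (join_indexed b a n)"
  by (simp add: sl_hom_def join_indexed_closed join_indexed_cube_join)

lemma le_join_indexed: "k \<le> n \<Longrightarrow> i < k \<Longrightarrow> S i \<Longrightarrow> a i \<sqsubseteq> join_indexed b a k S"
proof (induction k)
  case 0
  then show ?case by simp
next
  case (Suc k)
  then have mem: "a k \<in> A" "a i \<in> A" "join_indexed b a k S \<in> A"
    using a join_indexed_closed by auto
  show ?case
  proof (cases "i = k")
    case True
    with Suc show ?thesis using le_join1[of "a k" "join_indexed b a k S"] mem by simp
  next
    case False
    with Suc have "a i \<sqsubseteq> join_indexed b a k S" by simp
    then show ?thesis
      using le_trans[OF mem(2,3) join_closed[OF mem(1,3)]] le_join2[OF mem(1,3)] by simp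
  qed
qed

lemma join_indexed_least:
  assumes "x \<in> A" "b \<sqsubseteq> x" "\<And>i. i < n \<Longrightarrow> S i \<Longrightarrow> a i \<sqsubseteq> x" "k \<le> n"
  shows "join_indexed b a k S \<sqsubseteq> x"
  using \<open>k \<le> n\<close>
proof (induction k)
  case 0
  then show ?case using assms by simp
next
  case (Suc k)
  then have "a k \<in> A" "join_indexed b a k S \<in> A"
    using a join_indexed_closed by auto
  with Suc assms show ?case by (simp add: join_least)
qed

end

end

locale lattice_on = join_semilattice +
  fixes meet :: "'a \<Rightarrow> 'a \<Rightarrow> 'a" (infixl "\<sqinter>" 70)
  assumes meet_glb: "x \<in> A \<Longrightarrow> y \<in> A \<Longrightarrow> sl_is_glb A (\<squnion>) x y (x \<sqinter> y)"
begin

lemma meet_closed: "x \<in> A \<Longrightarrow> y \<in> A \<Longrightarrow> x \<sqinter> y \<in> A"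
  and meet_le1: "x \<in> A \<Longrightarrow> y \<in> A \<Longrightarrow> x \<sqinter> y \<sqsubseteq> x"
  and meet_le2: "x \<in> A \<Longrightarrow> y \<in> A \<Longrightarrow> x \<sqinter> y \<sqsubseteq> y"
  and meet_greatest: "x \<in> A \<Longrightarrow> y \<in> A \<Longrightarrow> z \<in> A \<Longrightarrow> z \<sqsubseteq> x \<Longrightarrow> z \<sqsubseteq> y \<Longrightarrow> z \<sqsubseteq> x \<sqinter> y"
  using meet_glb by (auto simp: sl_is_glb_def)

lemma finite_ex_lower_bound:
  assumes "finite F" "F \<noteq> {}" "F \<subseteq> A"
  shows "\<exists>b\<in>A. \<forall>x\<in>F. b \<sqsubseteq> x"
  using assms
proof (induction F rule: finite_ne_induct)
  case (singleton x)
  then show ?case using le_refl by auto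
next
  case (insert x F)
  then obtain b where b: "b \<in> A" "\<forall>y\<in>F. b \<sqsubseteq> y" and "x \<in> A" "F \<subseteq> A"
    by auto
  then have "x \<sqinter> b \<sqsubseteq> y" if "y \<in> F" for y
    using that le_trans[OF meet_closed b(1)] meet_le2 by blast
  with \<open>x \<in> A\<close> b(1) show ?case
    using meet_closed meet_le1 by blast
qed

lemma finite_ex_bot:
  assumes "finite A" "A \<noteq> {}"
  obtains b where "b \<in> A" "\<And>x. x \<in> A \<Longrightarrow> b \<sqsubseteq> x"
  using finite_ex_lower_bound[OF assms order_refl] by blast

end

locale distrib_lattice_on = lattice_on +
  assumes meet_join_distrib: "x \<in> A \<Longrightarrow> y \<in> A \<Longrightarrow> z \<in> A \<Longrightarrow> x \<sqinter> (y \<squnion> z) = x \<sqinter> y \<squnion> x \<sqinter> z"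
begin

lemma non_join_prime_split:
  assumes "x \<in> A" "\<not> join_prime x"
  obtains u v where "u \<in> A" "v \<in> A" "u \<sqsubseteq> x" "v \<sqsubseteq> x" "u \<noteq> x" "v \<noteq> x" "x = u \<squnion> v"
proof -
  from assms obtain y z where yz: "y \<in> A" "z \<in> A" "x \<sqsubseteq> y \<squnion> z" "\<not> x \<sqsubseteq> y" "\<not> x \<sqsubseteq> z"
    unfolding join_prime_def by blast
  have "x \<sqinter> (y \<squnion> z) = x"
    using yz assms le_refl
    by (metis le_antisym join_closed meet_closed meet_le1 meet_greatest)
  then have "x = x \<sqinter> y \<squnion> x \<sqinter> z"
    using meet_join_distrib assms yz by simp
  moreover have "x \<sqinter> y \<noteq> x" "x \<sqinter> z \<noteq> x"
    using yz assms meet_le2 by metis+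
  ultimately show thesis
    using that assms yz meet_closed meet_le1 by metis
qed

theorem le_if_join_primes_below:
  assumes "finite A" "x \<in> A" "y \<in> A"
    and "\<And>p. p \<in> A \<Longrightarrow> join_prime p \<Longrightarrow> p \<sqsubseteq> x \<Longrightarrow> p \<sqsubseteq> y"
  shows "x \<sqsubseteq> y"
  using assms(2,4)
proof (induction "card {w \<in> A. w \<sqsubseteq> x}" arbitrary: x rule: less_induct)
  case less
  show ?case
  proof (cases "join_prime x")
    case True
    then show ?thesis using less.prems le_refl by blast
  next
    case False
    then obtain u v where uv: "u \<in> A" "v \<in> A" "u \<sqsubseteq> x" "v \<sqsubseteq> x" "u \<noteq> x" "v \<noteq> x" "x = u \<squnion> v"
      using non_join_prime_split less.prems by blast
    have smaller: "w \<sqsubseteq> y" if w: "w \<in> A" "w \<sqsubseteq> x" "w \<noteq> x" for w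
    proof -
      have "{v \<in> A. v \<sqsubseteq> w} \<subset> {v \<in> A. v \<sqsubseteq> x}"
        using w less.prems le_trans le_refl le_antisym by blast
      then have "card {v \<in> A. v \<sqsubseteq> w} < card {v \<in> A. v \<sqsubseteq> x}"
        using \<open>finite A\<close> by (simp add: psubset_card_mono)
      then show ?thesis
        using less.hyps less.prems w le_trans by blast
    qed
    show ?thesis
      using uv smaller join_least \<open>y \<in> A\<close> by metis
  qed
qed

theorem sl_retract_cube:
  assumes "a ` {..<n} = A" "A \<noteq> {}"
  shows "sl_retract A (\<squnion>) (cube n) cube_join"
proof -
  have "finite A" and a: "a ` {..<n} \<subseteq> A"
    using assms(1) by auto
  then obtain b where b: "b \<in> A" "\<And>x. x \<in> A \<Longrightarrow> b \<sqsubseteq> x"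
    using finite_ex_bot assms(2) by blast
  have "join_indexed b a n (primes_below a n x) = x" if x: "x \<in> A" for x
  proof (rule le_antisym)
    show closed: "join_indexed b a n (primes_below a n x) \<in> A"
      using join_indexed_closed[OF b(1) a] by simp
    show "join_indexed b a n (primes_below a n x) \<sqsubseteq> x"
      by (rule join_indexed_least[OF b(1) a x b(2)[OF x]]) (auto simp: primes_below_def)
    show "x \<sqsubseteq> join_indexed b a n (primes_below a n x)"
    proof (rule le_if_join_primes_below[OF \<open>finite A\<close> x closed])
      fix p assume "p \<in> A" "join_prime p" "p \<sqsubseteq> x"
      moreover obtain i where "i < n" "p = a i"
        using assms(1) \<open>p \<in> A\<close> by auto
      ultimately show "p \<sqsubseteq> join_indexed b a n (primes_below a n x)"
        using le_join_indexed[OF b(1) a] by (simp add: primes_below_def)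
    qed
  qed (fact x)
  then show ?thesis
    unfolding sl_retract_def
    using sl_hom_primes_below[OF a] sl_hom_join_indexed[OF b(1) a] by blast
qed

end

theorem mainTheorem7:
  fixes A :: "'a set" and j :: "'a \<Rightarrow> 'a \<Rightarrow> 'a"
  assumes "in_box_vee A j"
  shows "\<exists>n::nat. sl_retract A j (cube n) cube_join"
proof -
  from assms obtain m where "semilattice_on A j" "finite A" "A \<noteq> {}"
    and "\<forall>x\<in>A. \<forall>y\<in>A. sl_is_glb A j x y (m x y)"
    and "\<forall>x\<in>A. \<forall>y\<in>A. \<forall>z\<in>A. m x (j y z) = j (m x y) (m x z)"
    by (auto simp: in_box_vee_def distrib_lattice_poset_def)
  then interpret distrib_lattice_on A j m
    by unfold_locales simp_all
  from \<open>finite A\<close> obtain n :: nat and a where "a ` {..<n} = A"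
    by (metis finite_conv_nat_seg_image lessThan_def)
  from sl_retract_cube[OF this \<open>A \<noteq> {}\<close>] show ?thesis ..
qed

end
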